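(* Let $0<q<1$. For $0<m<1$ put $a=(1-m)/q$ and define the discrete measure $$W(m,du)=\sum_{n=0}^\infty w(m,q^n)\frac{q^n}{(q;q)_n}\delta_{q^n}(du),\qquad w(m,q^n)=a^n(aq;q)_\infty.$$ Then $W(m,\cdot)$ is a probability measure with mean $m$ and variance $(1-q)m(1-m)$, and for every $n\ge0$, with $u=q^n$, $$\widetilde{D}_{q,m}w(m,u)=\frac{u-m}{(1-q)m(1-m)}\,w(m,u),\qquad 0<m<1.$$
   Context: $(x;q)_n=\prod_{k=0}^{n-1}(1-xq^k)$, $(x;q)_\infty=\prod_{k\ge0}(1-xq^k)$. The Hahn operator centered at $1$ is $(\widetilde{D}_{q,x}f)(x)=\frac{f(x)-f(qx+1-q)}{(1-q)(x-1)}$ for $x\ne1$. $\delta_b$ is the unit point mass at $b$. *)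

theory Defs
  imports "HOL-Probability.Probability"
begin

definition qpoch :: "real \<Rightarrow> real \<Rightarrow> nat \<Rightarrow> real" where
  "qpoch x q n = (\<Prod>k<n. 1 - x * q ^ k)"

definition qpoch_inf :: "real \<Rightarrow> real \<Rightarrow> real" where
  "qpoch_inf x q = prodinf (\<lambda>k. 1 - x * q ^ k)"

definition hahnD :: "real \<Rightarrow> (real \<Rightarrow> real) \<Rightarrow> real \<Rightarrow> real" where
  "hahnD q f x = (f x - f (q * x + 1 - q)) / ((1 - q) * (x - 1))"

definition wq :: "real \<Rightarrow> real \<Rightarrow> nat \<Rightarrow> real" where
  "wq q m n = (let a = (1 - m) / q in a ^ n * qpoch_inf (a * q) q)"

definition Wmeas :: "real \<Rightarrow> real \<Rightarrow> real measure" where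
  "Wmeas q m = measure_of UNIV (sets borel)
     (\<lambda>A. \<Sum>n. ennreal (wq q m n * q ^ n / qpoch q q n) * indicator A (q ^ n))"

end

theory Submission
  imports Defs
begin

(* With x = 1 - m, the mass of W(m,.) at q^n is (x;q)_inf x^n / (q;q)_n: W(m,.) is the image
   under n |-> q^n of the Euler distribution with parameter x. The series
   e(x) = sum_n x^n / (q;q)_n satisfies e(x) (1 - x) = e(qx), hence e(x) (x;q)_k = e(q^k x),
   and letting k tend to infinity gives Euler's identity e(x) (x;q)_inf = 1. So the k-th moment
   of u = q^n is (x;q)_inf e(q^k x) = (x;q)_k; k = 0, 1, 2 give total mass 1, mean 1 - x = m and
   second moment m (1 - q (1 - m)). The Hahn identity is the functional equation
   (x;q)_inf = (1 - x) (qx;q)_inf, since the shifted point qm + 1 - q has 1 - (qm + 1 - q) = q (1 - m). *)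

lemma qpoch_Suc: "qpoch x q (Suc n) = qpoch x q n * (1 - x * q ^ n)"
  unfolding qpoch_def by simp

lemma one_minus_mult_power_pos:
  fixes x q :: real
  assumes "x < 1" "0 \<le> q" "q \<le> 1"
  shows "0 < 1 - x * q ^ k"
proof (cases "x \<le> 0")
  case True
  then have "x * q ^ k \<le> 0" using assms by (simp add: mult_nonpos_nonneg)
  then show ?thesis by simp
next
  case False
  then have "x * q ^ k \<le> x" using assms by (simp add: mult_left_le power_le_one)
  then show ?thesis using assms by linarith
qed

lemma qpoch_pos: "x < 1 \<Longrightarrow> 0 \<le> q \<Longrightarrow> q \<le> 1 \<Longrightarrow> 0 < qpoch x q n"
  unfolding qpoch_def by (intro prod_pos one_minus_mult_power_pos ballI)

lemma convergent_prod_qpoch: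
  fixes x q :: real
  assumes "\<bar>q\<bar> < 1"
  shows "convergent_prod (\<lambda>k. 1 - x * q ^ k)"
proof -
  have "summable (\<lambda>k. \<bar>x\<bar> * \<bar>q\<bar> ^ k)" using assms by (intro summable_mult summable_geometric) auto
  then have "summable (\<lambda>k. norm (1 - x * q ^ k - 1))" by (simp add: abs_mult power_abs)
  then show ?thesis by (intro abs_convergent_prod_imp_convergent_prod summable_imp_abs_convergent_prod)
qed

lemma qpoch_inf_unfold:
  assumes "\<bar>q\<bar> < 1" "x \<noteq> 1"
  shows "qpoch_inf x q = (1 - x) * qpoch_inf (x * q) q"
proof -
  have "qpoch_inf (x * q) q = (\<Prod>k. 1 - x * q ^ Suc k)"
    unfolding qpoch_inf_def by (simp add: mult.assoc)
  also have "\<dots> = qpoch_inf x q / (1 - x)"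
    unfolding qpoch_inf_def using assms convergent_prod_qpoch by (subst prodinf_split_head) auto
  finally show ?thesis using assms by simp
qed

lemma qpoch_inf_pos: "x < 1 \<Longrightarrow> 0 \<le> q \<Longrightarrow> q < 1 \<Longrightarrow> 0 < qpoch_inf x q"
  unfolding qpoch_inf_def
  by (intro less_0_prodinf convergent_prod_qpoch one_minus_mult_power_pos) auto

lemma abs_qpower_mult_less_one:
  fixes q x :: real
  assumes "0 \<le> q" "q \<le> 1" "\<bar>x\<bar> < 1"
  shows "\<bar>q ^ k * x\<bar> < 1"
proof -
  have "\<bar>q ^ k * x\<bar> \<le> \<bar>x\<bar>"
    using assms by (simp add: abs_mult power_le_one mult_left_le_one_le)
  then show ?thesis using assms by linarith
qed

definition qexp :: "real \<Rightarrow> real \<Rightarrow> real" where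
  "qexp q x = (\<Sum>n. x ^ n / qpoch q q n)"

lemma summable_qexp:
  assumes q: "0 < q" "q < 1" and x: "\<bar>x\<bar> < 1"
  shows "summable (\<lambda>n. x ^ n / qpoch q q n)"
proof -
  have "(\<lambda>n. q ^ Suc n) \<longlonglongrightarrow> 0"
    using q by (intro LIMSEQ_Suc LIMSEQ_power_zero) auto
  then have "\<forall>\<^sub>F n in sequentially. q ^ Suc n < (1 - \<bar>x\<bar>) / 2"
    using x by (intro order_tendstoD(2)) auto
  then obtain N where N: "\<And>n. n \<ge> N \<Longrightarrow> q ^ Suc n < (1 - \<bar>x\<bar>) / 2"
    by (auto simp: eventually_sequentially)
  show ?thesis
  proof (rule summable_ratio_test[of "2 * \<bar>x\<bar> / (1 + \<bar>x\<bar>)" N])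
    show "2 * \<bar>x\<bar> / (1 + \<bar>x\<bar>) < 1" using x by (simp add: field_simps)
    fix n assume "N \<le> n"
    then have gap: "(1 + \<bar>x\<bar>) / 2 \<le> 1 - q ^ Suc n" using N by fastforce
    have "\<bar>x\<bar> / (1 - q ^ Suc n) \<le> \<bar>x\<bar> / ((1 + \<bar>x\<bar>) / 2)"
      using gap by (intro divide_left_mono) auto
    then have ratio: "\<bar>x\<bar> / (1 - q ^ Suc n) \<le> 2 * \<bar>x\<bar> / (1 + \<bar>x\<bar>)"
      by (simp add: mult.commute)
    have "qpoch q q n > 0" using q by (intro qpoch_pos) auto
    then have "norm (x ^ Suc n / qpoch q q (Suc n))
        = \<bar>x\<bar> / (1 - q ^ Suc n) * norm (x ^ n / qpoch q q n)"
      using gap x by (simp add: qpoch_Suc abs_mult)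
    also have "\<dots> \<le> 2 * \<bar>x\<bar> / (1 + \<bar>x\<bar>) * norm (x ^ n / qpoch q q n)"
      by (rule mult_right_mono[OF ratio norm_ge_zero])
    finally show "norm (x ^ Suc n / qpoch q q (Suc n))
        \<le> 2 * \<bar>x\<bar> / (1 + \<bar>x\<bar>) * norm (x ^ n / qpoch q q n)" .
  qed
qed

lemma qexp_sums: "0 < q \<Longrightarrow> q < 1 \<Longrightarrow> \<bar>x\<bar> < 1 \<Longrightarrow> (\<lambda>n. x ^ n / qpoch q q n) sums qexp q x"
  unfolding qexp_def by (intro summable_sums summable_qexp)

lemma qexp_shift:
  assumes q: "0 < q" "q < 1" and x: "\<bar>x\<bar> < 1"
  shows "qexp q x * (1 - x) = qexp q (q * x)"
proof -
  have "\<bar>q * x\<bar> < 1"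
    using q x abs_qpower_mult_less_one[of q x 1] by simp
  define t where "t n = x ^ n / qpoch q q n - (q * x) ^ n / qpoch q q n" for n
  have t_sums: "t sums (qexp q x - qexp q (q * x))"
    unfolding t_def using q x \<open>\<bar>q * x\<bar> < 1\<close> by (intro sums_diff qexp_sums)
  have "t (Suc n) = x * (x ^ n / qpoch q q n)" for n
  proof -
    have "1 - q * q ^ n \<noteq> 0" "qpoch q q n \<noteq> 0"
      using q one_minus_mult_power_pos[of q q n] qpoch_pos[of q q n] by auto
    moreover have "t (Suc n) = x ^ Suc n * (1 - q * q ^ n) / (qpoch q q n * (1 - q * q ^ n))"
      by (simp add: t_def qpoch_Suc power_mult_distrib diff_divide_distrib[symmetric] algebra_simps)
    ultimately show ?thesis by simp
  qed
  moreover have "t 0 = 0" by (simp add: t_def)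
  ultimately have "(\<lambda>n. x * (x ^ n / qpoch q q n)) sums (qexp q x - qexp q (q * x))"
    using t_sums sums_Suc_iff[of t] by simp
  moreover have "(\<lambda>n. x * (x ^ n / qpoch q q n)) sums (x * qexp q x)"
    using q x by (intro sums_mult qexp_sums)
  ultimately have "qexp q x - qexp q (q * x) = x * qexp q x"
    by (rule sums_unique2)
  then show ?thesis by (simp add: algebra_simps)
qed

lemma qexp_qpower_mult:
  assumes q: "0 < q" "q < 1" and x: "\<bar>x\<bar> < 1"
  shows "qexp q (q ^ k * x) = qexp q x * qpoch x q k"
proof (induction k)
  case 0
  then show ?case by (simp add: qpoch_def)
next
  case (Suc k)
  have "\<bar>q ^ k * x\<bar> < 1"
    using q x by (intro abs_qpower_mult_less_one) auto
  then have "qexp q (q * (q ^ k * x)) = qexp q (q ^ k * x) * (1 - x * q ^ k)"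
    using q by (simp add: qexp_shift[symmetric] mult.commute)
  then show ?case using Suc by (simp add: qpoch_Suc mult.assoc)
qed

lemma qexp_zero: "qexp q 0 = 1"
  using powser_zero[of "\<lambda>n. 1 / qpoch q q n"] by (simp add: qexp_def qpoch_def)

lemma isCont_qexp_zero:
  assumes "0 < q" "q < 1"
  shows "isCont (qexp q) 0"
proof -
  have "summable (\<lambda>n. 1 / qpoch q q n * (1 / 2) ^ n)"
    using summable_qexp[OF assms, of "1 / 2"] by simp
  then have "isCont (\<lambda>x. \<Sum>n. 1 / qpoch q q n * x ^ n) 0"
    by (rule isCont_powser) simp
  then show ?thesis by (simp add: qexp_def[abs_def])
qed

lemma qexp_mult_qpoch_inf:
  assumes q: "0 < q" "q < 1" and x: "\<bar>x\<bar> < 1"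
  shows "qexp q x * qpoch_inf x q = 1"
proof -
  have "(\<lambda>k. q ^ k * x) \<longlonglongrightarrow> 0 * x"
    using q by (intro tendsto_mult LIMSEQ_power_zero) auto
  then have "(\<lambda>k. qexp q (q ^ k * x)) \<longlonglongrightarrow> qexp q 0"
    using isCont_qexp_zero[OF q] isCont_tendsto_compose by fastforce
  then have lim1: "(\<lambda>k. qexp q x * qpoch x q k) \<longlonglongrightarrow> 1"
    by (simp add: qexp_qpower_mult[OF q x] qexp_zero)
  have "(\<lambda>k. \<Prod>j\<le>k. 1 - x * q ^ j) \<longlonglongrightarrow> qpoch_inf x q"
    unfolding qpoch_inf_def using q by (intro convergent_prod_LIMSEQ convergent_prod_qpoch) auto
  then have "(\<lambda>k. qpoch x q k) \<longlonglongrightarrow> qpoch_inf x q"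
    unfolding qpoch_def by (subst LIMSEQ_lessThan_iff_atMost)
  then have "(\<lambda>k. qexp q x * qpoch x q k) \<longlonglongrightarrow> qexp q x * qpoch_inf x q"
    by (intro tendsto_mult tendsto_const)
  then show ?thesis using lim1 LIMSEQ_unique by blast
qed

definition euler_weight :: "real \<Rightarrow> real \<Rightarrow> nat \<Rightarrow> real" where
  "euler_weight q x n = qpoch_inf x q * x ^ n / qpoch q q n"

lemma euler_weight_nonneg: "0 \<le> x \<Longrightarrow> x < 1 \<Longrightarrow> 0 < q \<Longrightarrow> q < 1 \<Longrightarrow> 0 \<le> euler_weight q x n"
  unfolding euler_weight_def using qpoch_inf_pos qpoch_pos[of q q n] by (simp add: less_imp_le)

lemma euler_weight_moment_sums:
  assumes q: "0 < q" "q < 1" and x: "\<bar>x\<bar> < 1"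
  shows "(\<lambda>n. euler_weight q x n * (q ^ n) ^ k) sums qpoch x q k"
proof -
  have "(\<lambda>n. qpoch_inf x q * ((q ^ k * x) ^ n / qpoch q q n)) sums (qpoch_inf x q * qexp q (q ^ k * x))"
    using q x abs_qpower_mult_less_one[of q x k] by (intro sums_mult qexp_sums) auto
  moreover have "qpoch_inf x q * qexp q (q ^ k * x) = qpoch x q k"
    using qexp_qpower_mult[OF q x] qexp_mult_qpoch_inf[OF q x] by (simp add: mult_ac)
  moreover have "euler_weight q x n * (q ^ n) ^ k = qpoch_inf x q * ((q ^ k * x) ^ n / qpoch q q n)" for n
    by (simp add: euler_weight_def power_mult_distrib mult.commute flip: power_mult)
  ultimately show ?thesis by simp
qed

lemma euler_weight_variance_sums:
  assumes q: "0 < q" "q < 1" and x: "\<bar>x\<bar> < 1"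
  shows "(\<lambda>n. euler_weight q x n * (q ^ n - (1 - x))\<^sup>2) sums ((1 - q) * x * (1 - x))"
proof -
  let ?p = "euler_weight q x"
  have "(\<lambda>n. ?p n * (q ^ n) ^ 2 - 2 * (1 - x) * (?p n * (q ^ n) ^ 1) + (1 - x)\<^sup>2 * (?p n * (q ^ n) ^ 0))
      sums (qpoch x q 2 - 2 * (1 - x) * qpoch x q 1 + (1 - x)\<^sup>2 * qpoch x q 0)"
    (is "?f sums ?v")
    using q x by (intro sums_add sums_diff sums_mult euler_weight_moment_sums)
  moreover have "?f = (\<lambda>n. ?p n * (q ^ n - (1 - x))\<^sup>2)"
    by (simp add: fun_eq_iff power2_eq_square algebra_simps)
  moreover have "?v = (1 - q) * x * (1 - x)"
    by (simp add: qpoch_def numeral_2_eq_2 power2_eq_square algebra_simps)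
  ultimately show ?thesis by simp
qed

lemma emeasure_distr_density_count_space_nat:
  fixes f :: "nat \<Rightarrow> 'a::topological_space"
  assumes "A \<in> sets borel"
  shows "emeasure (distr (density (count_space UNIV) p) borel f) A = (\<Sum>n. p n * indicator A (f n))"
proof -
  have "emeasure (distr (density (count_space UNIV) p) borel f) A
      = emeasure (density (count_space UNIV) p) (f -` A)"
    using assms by (subst emeasure_distr) auto
  also have "\<dots> = (\<Sum>n. p n * indicator A (f n))"
    by (simp add: emeasure_density nn_integral_count_space_nat indicator_def)
  finally show ?thesis .
qed

lemma measure_of_suminf_point_masses:
  fixes f :: "nat \<Rightarrow> 'a::topological_space"
  shows "measure_of UNIV (sets borel) (\<lambda>A. \<Sum>n. p n * indicator A (f n))
    = distr (density (count_space UNIV) p) borel f" (is "_ = ?D")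
proof -
  have "measure_of UNIV (sets borel) (\<lambda>A. \<Sum>n. p n * indicator A (f n))
      = measure_of UNIV (sets borel) (emeasure ?D)"
  proof (rule measure_of_eq)
    fix A :: "'a set" assume "A \<in> sigma_sets UNIV (sets borel)"
    then have "A \<in> sets borel" by (metis sets.sigma_sets_eq space_borel)
    then show "(\<Sum>n. p n * indicator A (f n)) = emeasure ?D A"
      by (simp add: emeasure_distr_density_count_space_nat)
  qed simp
  also have "\<dots> = ?D"
    using measure_of_of_measure[of ?D] by simp
  finally show ?thesis .
qed

lemma prob_space_distr_density_count_space_nat:
  fixes f :: "nat \<Rightarrow> 'a::topological_space"
  assumes "\<And>n. 0 \<le> p n" "p sums 1"
  shows "prob_space (distr (density (count_space UNIV) (\<lambda>n. ennreal (p n))) borel f)"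
proof (rule prob_spaceI)
  have "(\<Sum>n. ennreal (p n)) = ennreal 1"
    using assms sums_ennreal[of p 1] by (intro sums_unique[symmetric]) simp
  then show "emeasure (distr (density (count_space UNIV) (\<lambda>n. ennreal (p n))) borel f)
      (space (distr (density (count_space UNIV) (\<lambda>n. ennreal (p n))) borel f)) = 1"
    by (simp add: emeasure_distr_density_count_space_nat)
qed

lemma has_bochner_integral_distr_density_count_space_nat:
  fixes f :: "nat \<Rightarrow> 'a::topological_space" and g :: "'a \<Rightarrow> real"
  assumes g: "g \<in> borel_measurable borel" and p: "\<And>n. 0 \<le> p n"
    and summable: "summable (\<lambda>n. p n * \<bar>g (f n)\<bar>)"
  shows "has_bochner_integral (distr (density (count_space UNIV) (\<lambda>n. ennreal (p n))) borel f) g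
    (\<Sum>n. p n * g (f n))"
proof -
  have "integrable (count_space UNIV) (\<lambda>n. p n *\<^sub>R g (f n))"
    unfolding integrable_count_space_nat_iff using summable p by (simp add: abs_mult)
  then have "has_bochner_integral (count_space UNIV) (\<lambda>n. p n *\<^sub>R g (f n)) (\<Sum>n. p n * g (f n))"
    by (simp add: has_bochner_integral_iff integral_count_space_nat)
  then have "has_bochner_integral (density (count_space UNIV) (\<lambda>n. ennreal (p n))) (\<lambda>n. g (f n))
      (\<Sum>n. p n * g (f n))"
    using p by (intro has_bochner_integral_density) auto
  then show ?thesis
    using g by (intro has_bochner_integral_distr) auto
qed

lemma Wmeas_eq_distr:
  assumes "q \<noteq> 0"
  shows "Wmeas q m
    = distr (density (count_space UNIV) (\<lambda>n. ennreal (euler_weight q (1 - m) n))) borel (\<lambda>n. q ^ n)"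
proof -
  have "wq q m n * q ^ n / qpoch q q n = euler_weight q (1 - m) n" for n
    using assms by (simp add: wq_def euler_weight_def power_divide)
  then show ?thesis
    unfolding Wmeas_def by (simp add: measure_of_suminf_point_masses)
qed

lemma hahnD_wq:
  fixes q m :: real
  assumes "\<bar>q\<bar> < 1" "q \<noteq> 0" "m \<noteq> 0" "m \<noteq> 1"
  shows "hahnD q (\<lambda>t. wq q t n) m = (q ^ n - m) / ((1 - q) * m * (1 - m)) * wq q m n"
proof -
  define c where "c = ((1 - m) / q) ^ n * qpoch_inf ((1 - m) * q) q"
  have w_m: "wq q m n = m * c"
    using assms qpoch_inf_unfold[of q "1 - m"] by (simp add: wq_def c_def)
  have "(1 - (q * m + 1 - q)) / q = 1 - m"
    using assms by (simp add: field_simps)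
  then have w_shift: "wq q (q * m + 1 - q) n = q ^ n * c"
    using assms by (simp add: wq_def c_def Let_def power_divide)
  show ?thesis
    unfolding hahnD_def w_m w_shift using assms
    by (simp add: divide_simps) (simp add: algebra_simps)
qed

theorem mainTheorem16:
  fixes q m :: real
  assumes "0 < q" "q < 1" "0 < m" "m < 1"
  shows "prob_space (Wmeas q m)
    \<and> integrable (Wmeas q m) (\<lambda>x. x)
    \<and> (\<integral>x. x \<partial>Wmeas q m) = m
    \<and> integrable (Wmeas q m) (\<lambda>x. (x - m)\<^sup>2)
    \<and> (\<integral>x. (x - m)\<^sup>2 \<partial>Wmeas q m) = (1 - q) * m * (1 - m)
    \<and> (\<forall>n::nat.
          hahnD q (\<lambda>t. wq q t n) m = (q ^ n - m) / ((1 - q) * m * (1 - m)) * wq q m n)"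
proof -
  let ?p = "euler_weight q (1 - m)"
  have q: "0 < q" "q < 1" and x: "\<bar>1 - m\<bar> < 1"
    using assms by auto
  have W: "Wmeas q m = distr (density (count_space UNIV) (\<lambda>n. ennreal (?p n))) borel (\<lambda>n. q ^ n)"
    using assms by (intro Wmeas_eq_distr) auto
  have p_nonneg: "0 \<le> ?p n" for n
    using assms by (intro euler_weight_nonneg) auto
  have total: "?p sums 1"
    using euler_weight_moment_sums[OF q x, of 0] by (simp add: qpoch_def)
  have mean: "(\<lambda>n. ?p n * q ^ n) sums m"
    using euler_weight_moment_sums[OF q x, of 1] by (simp add: qpoch_def)
  have variance: "(\<lambda>n. ?p n * (q ^ n - m)\<^sup>2) sums ((1 - q) * m * (1 - m))"
    using euler_weight_variance_sums[OF q x] by (simp add: mult_ac)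
  have "has_bochner_integral (Wmeas q m) (\<lambda>x. x) (\<Sum>n. ?p n * q ^ n)"
    unfolding W using p_nonneg mean q
    by (intro has_bochner_integral_distr_density_count_space_nat) (auto simp: sums_iff)
  moreover have "has_bochner_integral (Wmeas q m) (\<lambda>x. (x - m)\<^sup>2) (\<Sum>n. ?p n * (q ^ n - m)\<^sup>2)"
    unfolding W using p_nonneg variance
    by (intro has_bochner_integral_distr_density_count_space_nat) (auto simp: sums_iff)
  moreover have "prob_space (Wmeas q m)"
    unfolding W using p_nonneg total by (rule prob_space_distr_density_count_space_nat)
  moreover have "hahnD q (\<lambda>t. wq q t n) m = (q ^ n - m) / ((1 - q) * m * (1 - m)) * wq q m n" for n
    using assms by (intro hahnD_wq) auto
  ultimately show ?thesis
    unfolding sums_unique[OF mean, symmetric] sums_unique[OF variance, symmetric]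
    by (simp add: has_bochner_integral_iff)
qed

end
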